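(* Let $\mathcal G=(\mathcal V,\mathcal E,W)$ be a network, $h\in\mathbb{R}^{\mathcal V}$, and consider the SNC game with binary actions on $\mathcal G$ with external field $h$, with set of Nash equilibria $\mathcal N$. Let $\mathcal V=\mathcal R\cup\mathcal S$, $\mathcal R\cap\mathcal S=\emptyset$, be a binary partition such that $\mathcal G_{\mathcal R}$ is unsigned. Assume there exists $a\in\{\pm1\}$ such that $$w_i^{\mathcal R}+ah_i\ge w_i^{\mathcal S}\qquad\forall i\in\mathcal R,$$ and $\mathcal N_{\mathcal S}^{(a\mathbf 1)}\neq\emptyset$. Then there exists a Nash equilibrium $x^*\in\mathcal N$ with $x^*_{\mathcal R}=a\mathbf 1$.
   Context: A network is a triple $\mathcal G=(\mathcal V,\mathcal E,W)$ where $\mathcal V$ is a finite nonempty set, $\mathcal E\subseteq\mathcal V\times\mathcal V$, and $W\in\mathbb{R}^{\mathcal V\times\mathcal V}$ has zero diagonal and satisfies $W_{ij}\neq0$ iff $(i,j)\in\mathcal E$ (weights may have either sign). It is unsigned if $W\ge0$ entrywise. For $\mathcal U\subseteq\mathcal V$, the subnetwork $\mathcal G_{\mathcal U}$ has node set $\mathcal U$, links $\mathcal E\cap(\mathcal U\times\mathcal U)$ and weight matrix $W_{\mathcal U\mathcal U}$. For $i\in\mathcal V$ and $\mathcal B\subseteq\mathcal V$, $w_i^{\mathcal B}=\sum_{j\in\mathcal B}|W_{ij}|$. $\mathbf 1$ is the all-ones vector. The SNC game with binary actions on $\mathcal G$ with external field $h\in\mathbb{R}^{\mathcal V}$ has player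 set $\mathcal V$, action set $\{-1,+1\}$ for each player, strategy profiles $\mathcal X=\{\pm1\}^{\mathcal V}$, and utilities $u_i(x)=h_ix_i+x_i\sum_{j\in\mathcal V}W_{ij}x_j$. Best responses $\mathcal B_i(x_{-i})=\arg\max_{x_i\in\{\pm1\}}u_i(x_i,x_{-i})$; Nash equilibrium: $x^*_i\in\mathcal B_i(x^*_{-i})$ for all $i$. Profiles are written $x=(x_{\mathcal R},x_{\mathcal S})$. For $y\in\{\pm1\}^{\mathcal R}$, the $\mathcal S$-restricted game with strategy profile of players in $\mathcal R$ frozen to $y$ has player set $\mathcal S$, actions $\{\pm1\}$, and utilities $u_i^{(y)}(z)=u_i(y,z)$ for $i\in\mathcal S$, $z\in\{\pm1\}^{\mathcal S}$; $\mathcal N_{\mathcal S}^{(y)}$ is its set of Nash equilibria. *)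

theory Defs
  imports "HOL-Analysis.Analysis"
begin

definition network :: "'v set \<Rightarrow> ('v \<times> 'v) set \<Rightarrow> ('v \<Rightarrow> 'v \<Rightarrow> real) \<Rightarrow> bool" where
  "network V E W \<longleftrightarrow> finite V \<and> V \<noteq> {} \<and> E \<subseteq> V \<times> V \<and>
     (\<forall>i\<in>V. W i i = 0) \<and> (\<forall>i\<in>V. \<forall>j\<in>V. W i j \<noteq> 0 \<longleftrightarrow> (i, j) \<in> E)"

definition unsigned_on :: "'v set \<Rightarrow> ('v \<Rightarrow> 'v \<Rightarrow> real) \<Rightarrow> bool" where
  "unsigned_on U W \<longleftrightarrow> (\<forall>i\<in>U. \<forall>j\<in>U. W i j \<ge> 0)"

definition wdeg :: "('v \<Rightarrow> 'v \<Rightarrow> real) \<Rightarrow> 'v \<Rightarrow> 'v set \<Rightarrow> real" where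
  "wdeg W i B = (\<Sum>j\<in>B. \<bar>W i j\<bar>)"

definition profiles :: "'v set \<Rightarrow> ('v \<Rightarrow> real) set" where
  "profiles P = {x. (\<forall>i\<in>P. x i \<in> {-1, 1}) \<and> (\<forall>i. i \<notin> P \<longrightarrow> x i = 0)}"

definition utility :: "'v set \<Rightarrow> ('v \<Rightarrow> 'v \<Rightarrow> real) \<Rightarrow> ('v \<Rightarrow> real) \<Rightarrow> 'v \<Rightarrow> ('v \<Rightarrow> real) \<Rightarrow> real" where
  "utility V W h i x = h i * x i + x i * (\<Sum>j\<in>V. W i j * x j)"

definition nash :: "'v set \<Rightarrow> ('v \<Rightarrow> 'v \<Rightarrow> real) \<Rightarrow> ('v \<Rightarrow> real) \<Rightarrow> ('v \<Rightarrow> real) set" where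
  "nash V W h = {x \<in> profiles V. \<forall>i\<in>V. \<forall>s\<in>{-1, 1}.
      utility V W h i x \<ge> utility V W h i (x(i := s))}"

(* Nash equilibria of the S-restricted game with players in R frozen to y
   (y \<in> profiles R, z \<in> profiles S, the joint profile is y + z) *)
definition restricted_nash :: "'v set \<Rightarrow> ('v \<Rightarrow> 'v \<Rightarrow> real) \<Rightarrow> ('v \<Rightarrow> real) \<Rightarrow> 'v set \<Rightarrow>
    ('v \<Rightarrow> real) \<Rightarrow> ('v \<Rightarrow> real) set" where
  "restricted_nash V W h S y = {z \<in> profiles S. \<forall>i\<in>S. \<forall>s\<in>{-1, 1}.
      utility V W h i (\<lambda>j. y j + z j) \<ge> utility V W h i ((\<lambda>j. y j + z j)(i := s))}"

end

theory Submission
  imports Defs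
begin

(* Freezing the players of R at the common action a makes every link inside R
   (unsigned) pull each i \<in> R towards a with total strength w_i^R, while the links to S
   can pull the other way with strength at most w_i^S; the hypothesis says the field a h_i
   tips the balance, so a is a best response for every i \<in> R. Combined with an
   equilibrium of the game restricted to S this gives a Nash equilibrium. *)

definition local_field :: "'v set \<Rightarrow> ('v \<Rightarrow> 'v \<Rightarrow> real) \<Rightarrow> ('v \<Rightarrow> real) \<Rightarrow> 'v \<Rightarrow> ('v \<Rightarrow> real) \<Rightarrow> real"
  where "local_field V W h i x = h i + (\<Sum>j\<in>V. W i j * x j)"

lemma utility_eq_local_field: "utility V W h i x = x i * local_field V W h i x"
  by (simp add: utility_def local_field_def algebra_simps)

lemma local_field_fun_upd_self:
  assumes "W i i = 0"
  shows "local_field V W h i (x(i := s)) = local_field V W h i x"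
  unfolding local_field_def using assms by (auto intro!: sum.cong)

lemma utility_fun_upd_le_if_aligned:
  assumes "W i i = 0" and "x i \<in> {-1, 1}" and "s \<in> {-1, 1}"
    and "x i * local_field V W h i x \<ge> 0"
  shows "utility V W h i (x(i := s)) \<le> utility V W h i x"
proof -
  let ?F = "local_field V W h i x"
  have "utility V W h i (x(i := s)) = s * ?F"
    using assms(1) by (simp add: utility_eq_local_field local_field_fun_upd_self)
  also have "\<dots> \<le> \<bar>?F\<bar>"
    using assms(3) by auto
  also have "\<dots> = x i * ?F"
    using assms(2,4) by auto
  finally show ?thesis
    by (simp add: utility_eq_local_field)
qed

lemma abs_weighted_sum_le_wdeg:
  assumes "\<forall>j\<in>B. \<bar>x j\<bar> \<le> 1"
  shows "\<bar>\<Sum>j\<in>B. W i j * x j\<bar> \<le> wdeg W i B"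
  unfolding wdeg_def
proof (rule order_trans[OF sum_abs sum_mono])
  fix j assume "j \<in> B"
  then show "\<bar>W i j * x j\<bar> \<le> \<bar>W i j\<bar>"
    using assms by (simp add: abs_mult mult_left_le)
qed

lemma weighted_sum_const_unsigned:
  assumes "\<forall>j\<in>B. W i j \<ge> 0" and "\<forall>j\<in>B. x j = a" and "a \<in> {-1, 1}"
  shows "a * (\<Sum>j\<in>B. W i j * x j) = wdeg W i B"
  unfolding wdeg_def sum_distrib_left
  using assms by (intro sum.cong) auto

lemma local_field_aligned_if_dominated:
  assumes "finite V" and "V = R \<union> S" and "R \<inter> S = {}"
    and "\<forall>j\<in>R. W i j \<ge> 0" and "\<forall>j\<in>R. x j = a" and "\<forall>j\<in>S. \<bar>x j\<bar> \<le> 1"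
    and "a \<in> {-1, 1}" and "wdeg W i R + a * h i \<ge> wdeg W i S"
  shows "a * local_field V W h i x \<ge> 0"
proof -
  have "a * local_field V W h i x
      = a * h i + a * (\<Sum>j\<in>R. W i j * x j) + a * (\<Sum>j\<in>S. W i j * x j)"
    using assms(1-3) by (simp add: local_field_def sum.union_disjoint algebra_simps)
  moreover have "a * (\<Sum>j\<in>R. W i j * x j) = wdeg W i R"
    using assms(4,5,7) by (rule weighted_sum_const_unsigned)
  moreover have "a * (\<Sum>j\<in>S. W i j * x j) \<ge> - wdeg W i S"
    using abs_weighted_sum_le_wdeg[OF assms(6), of W i] assms(7) by auto
  ultimately show ?thesis
    using assms(8) by linarith
qed

lemma profiles_add_disjoint:
  assumes "y \<in> profiles R" and "z \<in> profiles S" and "R \<inter> S = {}"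
  shows "(\<lambda>j. y j + z j) \<in> profiles (R \<union> S)"
proof -
  have "z j = 0" if "j \<in> R" for j
    using that assms(2,3) by (auto simp: profiles_def)
  moreover have "y j = 0" if "j \<in> S" for j
    using that assms(1,3) by (auto simp: profiles_def)
  ultimately show ?thesis
    using assms(1,2) by (auto simp: profiles_def)
qed

lemma utility_fun_upd_le_in_dominated_block:
  assumes "network V E W" and "V = R \<union> S" and "R \<inter> S = {}" and "unsigned_on R W"
    and "a \<in> {-1, 1}" and "x \<in> profiles V" and "\<forall>j\<in>R. x j = a"
    and "i \<in> R" and "wdeg W i R + a * h i \<ge> wdeg W i S" and "s \<in> {-1, 1}"
  shows "utility V W h i (x(i := s)) \<le> utility V W h i x"
proof (rule utility_fun_upd_le_if_aligned)
  show "W i i = 0" and "x i \<in> {-1, 1}"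
    using assms(1,2,7,8,5) by (auto simp: network_def)
  have "\<forall>j\<in>S. \<bar>x j\<bar> \<le> 1"
    using assms(2,6) by (force simp: profiles_def)
  moreover have "finite V" and "\<forall>j\<in>R. W i j \<ge> 0"
    using assms(1,4,8) by (auto simp: network_def unsigned_on_def)
  ultimately have "a * local_field V W h i x \<ge> 0"
    using assms(2,3,5,7,9) by (intro local_field_aligned_if_dominated[of V R S]) auto
  then show "x i * local_field V W h i x \<ge> 0"
    using assms(7,8) by simp
qed (fact assms(10))

theorem proposition4:
  fixes V R S :: "'v set" and E :: "('v \<times> 'v) set" and W :: "'v \<Rightarrow> 'v \<Rightarrow> real"
    and h :: "'v \<Rightarrow> real" and a :: real
  assumes "network V E W"
    and "V = R \<union> S" and "R \<inter> S = {}"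
    and "unsigned_on R W"
    and "a \<in> {-1, 1}"
    and "\<forall>i\<in>R. wdeg W i R + a * h i \<ge> wdeg W i S"
    and "restricted_nash V W h S (\<lambda>j. if j \<in> R then a else 0) \<noteq> {}"
  shows "\<exists>x\<in>nash V W h. \<forall>i\<in>R. x i = a"
proof -
  define y where "y = (\<lambda>j. if j \<in> R then a else 0)"
  obtain z where z: "z \<in> restricted_nash V W h S y"
    using assms(7) by (auto simp: y_def)
  define x where "x = (\<lambda>j. y j + z j)"
  have z_profile: "z \<in> profiles S"
    using z by (simp add: restricted_nash_def)
  have x_on_R: "\<forall>j\<in>R. x j = a"
    using z_profile assms(3) by (auto simp: x_def y_def profiles_def)
  have x_profile: "x \<in> profiles V"
    unfolding x_def assms(2) using assms(3,5) z_profile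
    by (intro profiles_add_disjoint) (auto simp: y_def profiles_def)
  have S_best: "\<forall>i\<in>S. \<forall>s\<in>{-1, 1}. utility V W h i (x(i := s)) \<le> utility V W h i x"
    using z by (simp add: restricted_nash_def x_def)
  have R_best: "\<forall>i\<in>R. \<forall>s\<in>{-1, 1}. utility V W h i (x(i := s)) \<le> utility V W h i x"
    using utility_fun_upd_le_in_dominated_block[OF assms(1-5) x_profile x_on_R] assms(6) by blast
  have "x \<in> nash V W h"
    using x_profile S_best R_best assms(2) by (auto simp: nash_def)
  with x_on_R show ?thesis
    by blast
qed

end
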